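(* Let $\mathcal{D}$ be a domain, let $a\in\mathrm{IET}(\mathcal{D})$ be stable, with irreducible components $I_1,\dots,I_r$. Let $g\in\mathrm{IET}(\mathcal{D})$ be such that $gag^{-1}$ commutes with $a$. Then for every $i$, either $g(I_i)$ is disjoint from $I_1\cup\dots\cup I_r$, or $g(I_i)=I_j$ for some $j$.
   Context: A domain is a non-empty disjoint union of finitely many oriented circles and oriented half-open bounded intervals closed on the left; a subdomain is a subset that is itself a domain. $\mathrm{IET}(\mathcal{D})$ is the group of bijections of $\mathcal{D}$ that are orientation-preserving piecewise isometries, left-continuous, with finitely many discontinuity points. For a finitely generated $G<\mathrm{IET}(\mathcal{D})$: $G$ is irreducible on a $G$-invariant subdomain $J$ if every $G$-orbit in $J$ is dense in $J$; the irreducible components of $G$ are the members of the unique finite collection of pairwise disjoint $G$-invariant subdomains on each of which $G$ is irreducible and such that $G$ acts as a finite group on the complement of their union. $G$ is stable if every subdomain invariant under a finite index subgroup of $G$ is $G$-invariant. An element $a$ is called stable (resp. irreducible) if $\langle a\rangle$ is stable (resp. irreducible on $\mathcal{D}$), and its irreducible components are those of $\langle a\rangle$. *)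

theory Defs
  imports "HOL-Analysis.Analysis"
begin

text \<open>Points of a domain are coded as pairs (k, x): component index k and
 coordinate x in [0, len k).  A circle of length L is coded by [0, L)
 (cut open at a base point).\<close>

definition box :: "nat \<Rightarrow> real \<Rightarrow> real \<Rightarrow> (nat \<times> real) set" where
  "box k a b = {k} \<times> {a..<b}"

definition is_domain :: "(nat \<times> real) set \<Rightarrow> bool" where
  "is_domain D \<longleftrightarrow> (\<exists>n len. n \<ge> 1 \<and> (\<forall>k<n. (0::real) < len k) \<and>
      D = (\<Union>k<n. box k 0 (len k)))"

definition subdomain :: "(nat \<times> real) set \<Rightarrow> (nat \<times> real) set \<Rightarrow> bool" where
  "subdomain D J \<longleftrightarrow> J \<subseteq> D \<and> J \<noteq> {} \<and>
     (\<exists>B. finite B \<and> (\<forall>(k,a,b)\<in>B. a < b) \<and> J = (\<Union>(k,a,b)\<in>B. box k a b))"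

definition IET :: "(nat \<times> real) set \<Rightarrow> ((nat \<times> real) \<Rightarrow> (nat \<times> real)) set" where
  "IET D = {f. bij_betw f D D \<and>
     (\<exists>P. finite P \<and> (\<forall>(k,a,b)\<in>P. a < b \<and> box k a b \<subseteq> D) \<and>
          D = (\<Union>(k,a,b)\<in>P. box k a b) \<and>
          (\<forall>(k,a,b)\<in>P. \<exists>k' c. \<forall>x\<in>{a..<b}. f (k, x) = (k', x + c)))}"

definition ipow :: "(nat \<times> real) set \<Rightarrow> ((nat \<times> real) \<Rightarrow> (nat \<times> real)) \<Rightarrow> int
    \<Rightarrow> (nat \<times> real) \<Rightarrow> (nat \<times> real)" where
  "ipow D f m = (if 0 \<le> m then f ^^ nat m else (inv_into D f) ^^ nat (- m))"

definition cyc_orbit :: "(nat \<times> real) set \<Rightarrow> ((nat \<times> real) \<Rightarrow> (nat \<times> real))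
    \<Rightarrow> (nat \<times> real) \<Rightarrow> (nat \<times> real) set" where
  "cyc_orbit D f p = {ipow D f m p | m. True}"

definition cyc_invariant :: "((nat \<times> real) \<Rightarrow> (nat \<times> real)) \<Rightarrow> (nat \<times> real) set \<Rightarrow> bool" where
  "cyc_invariant f J \<longleftrightarrow> f ` J = J"

text \<open>Stability of a: every subdomain invariant under a finite index subgroup
 (necessarily of the form generated by a^m, m \<ge> 1) is invariant under a.\<close>
definition stable_elem :: "(nat \<times> real) set \<Rightarrow> ((nat \<times> real) \<Rightarrow> (nat \<times> real)) \<Rightarrow> bool" where
  "stable_elem D a \<longleftrightarrow> (\<forall>m::nat. m \<ge> 1 \<longrightarrow> (\<forall>J. subdomain D J \<longrightarrow>
       cyc_invariant (a ^^ m) J \<longrightarrow> cyc_invariant a J))"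

definition irreducible_on :: "(nat \<times> real) set \<Rightarrow> ((nat \<times> real) \<Rightarrow> (nat \<times> real))
    \<Rightarrow> (nat \<times> real) set \<Rightarrow> bool" where
  "irreducible_on D a J \<longleftrightarrow> (\<forall>p\<in>J. J \<subseteq> closure (cyc_orbit D a p))"

definition irreducible_components :: "(nat \<times> real) set \<Rightarrow> ((nat \<times> real) \<Rightarrow> (nat \<times> real))
    \<Rightarrow> (nat \<times> real) set set \<Rightarrow> bool" where
  "irreducible_components D a C \<longleftrightarrow> finite C \<and>
     (\<forall>J\<in>C. subdomain D J \<and> cyc_invariant a J \<and> irreducible_on D a J) \<and>
     (\<forall>J\<in>C. \<forall>J'\<in>C. J \<noteq> J' \<longrightarrow> J \<inter> J' = {}) \<and>
     (\<exists>m::nat. m \<ge> 1 \<and> (\<forall>p \<in> D - \<Union>C. (a ^^ m) p = p))"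

end

theory Submission
  imports Defs
begin

text \<open>Put b = g a g\<inverse>. Conjugation by g carries the irreducible components of a to those of b, and
  the stability of a to b. If f commutes with h and moves subdomains to subdomains preserving
  density, then f maps each component of h onto an h-invariant subdomain on which h is irreducible;
  as h is periodic off its components, such a set must meet, and hence be, a component of h. So f
  permutes the components of h and some power of f fixes each of them.

  Now let a component K of b meet a component J of a. Some power of a fixes K, so K \<inter> J is a
  subdomain invariant under a power of a, hence under a by stability, and irreducibility of a on J
  forces K \<inter> J = J. Exchanging the roles of a and b (b is stable too) gives K = J.\<close>

section \<open>Closures and subdomains\<close>

lemma mem_closure_iff_nearby:
  fixes S :: "(nat \<times> real) set"
  shows "(k, x) \<in> closure S \<longleftrightarrow> (\<forall>e>0. \<exists>y. (k, y) \<in> S \<and> \<bar>y - x\<bar> < e)"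
proof
  assume x: "(k, x) \<in> closure S"
  show "\<forall>e>0. \<exists>y. (k, y) \<in> S \<and> \<bar>y - x\<bar> < e"
  proof (intro allI impI)
    fix e :: real assume "e > 0"
    have "open ({k} \<times> ball x e)" by (intro open_Times open_discrete open_ball)
    moreover have "(k, x) \<in> {k} \<times> ball x e" using \<open>e > 0\<close> by simp
    ultimately have "S \<inter> ({k} \<times> ball x e) \<noteq> {}" using x unfolding closure_iff_nhds_not_empty by blast
    thus "\<exists>y. (k, y) \<in> S \<and> \<bar>y - x\<bar> < e" by (auto simp: dist_real_def)
  qed
next
  assume near: "\<forall>e>0. \<exists>y. (k, y) \<in> S \<and> \<bar>y - x\<bar> < e"
  show "(k, x) \<in> closure S"
    unfolding closure_iff_nhds_not_empty
  proof (intro allI impI)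
    fix A T assume T: "T \<subseteq> A" "open T" "(k, x) \<in> T"
    then obtain U V where UV: "open U" "open V" "(k, x) \<in> U \<times> V" "U \<times> V \<subseteq> T"
      using open_prod_def by metis
    then obtain e where e: "e > 0" "\<forall>y. dist y x < e \<longrightarrow> y \<in> V"
      using open_dist by (metis mem_Times_iff snd_conv)
    obtain y where y: "(k, y) \<in> S" "\<bar>y - x\<bar> < e" using near e(1) by blast
    have "(k, y) \<in> U \<times> V" using UV(3) e(2) y(2) by (auto simp: dist_real_def)
    thus "S \<inter> A \<noteq> {}" using y(1) UV(4) T(1) by blast
  qed
qed

definition box_union :: "(nat \<times> real) set \<Rightarrow> bool" where
  "box_union J \<longleftrightarrow> (\<exists>B. finite B \<and> J = (\<Union>(k,a,b)\<in>B. box k a b))"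

lemma subdomain_iff_box_union: "subdomain D J \<longleftrightarrow> J \<subseteq> D \<and> J \<noteq> {} \<and> box_union J"
proof -
  have "\<exists>B'. finite B' \<and> (\<forall>(k,a,b)\<in>B'. a < b) \<and> J = (\<Union>(k,a,b)\<in>B'. box k a b)"
    if "finite B" "J = (\<Union>(k,a,b)\<in>B. box k a b)" for B
  proof (intro exI conjI)
    let ?B' = "{(k,a,b)\<in>B. a < b}"
    show "finite ?B'" using that(1) by (rule rev_finite_subset) auto
    show "\<forall>(k,a,b)\<in>?B'. a < b" by auto
    show "J = (\<Union>(k,a,b)\<in>?B'. box k a b)" unfolding that(2) by (auto simp: box_def) force
  qed
  thus ?thesis unfolding subdomain_def box_union_def by blast
qed

lemma subdomain_subset: "subdomain D J \<Longrightarrow> J \<subseteq> D"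
  by (simp add: subdomain_def)

lemma box_union_box: "box_union (box k a b)"
  unfolding box_union_def by (intro exI[of _ "{(k, a, b)}"]) simp

lemma box_union_empty: "box_union {}"
  unfolding box_union_def by (intro exI[of _ "{}"]) simp

lemma box_union_UN:
  assumes "finite I" "\<forall>i\<in>I. box_union (F i)"
  shows "box_union (\<Union>i\<in>I. F i)"
proof -
  obtain B where fin: "\<And>i. i \<in> I \<Longrightarrow> finite (B i)"
    and eq: "\<And>i. i \<in> I \<Longrightarrow> F i = (\<Union>(k,a,b)\<in>B i. box k a b)"
    using assms(2) unfolding box_union_def by metis
  have "(\<Union>i\<in>I. F i) = (\<Union>i\<in>I. \<Union>(k,a,b)\<in>B i. box k a b)"
    using eq by (rule SUP_cong[OF refl])
  also have "\<dots> = (\<Union>(k,a,b)\<in>(\<Union>i\<in>I. B i). box k a b)"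
    by (rule UN_UN_flatten[symmetric])
  finally have "(\<Union>i\<in>I. F i) = (\<Union>(k,a,b)\<in>(\<Union>i\<in>I. B i). box k a b)" .
  moreover have "finite (\<Union>i\<in>I. B i)" using assms(1) fin by simp
  ultimately show ?thesis unfolding box_union_def by (intro exI[of _ "\<Union>i\<in>I. B i"] conjI)
qed

lemma box_Int: "box k a b \<inter> box k' a' b' = (if k = k' then box k (max a a') (min b b') else {})"
  by (auto simp: box_def)

lemma box_union_Int:
  assumes "box_union J" "box_union K"
  shows "box_union (J \<inter> K)"
proof -
  obtain B B' where B: "finite B" "J = (\<Union>(k,a,b)\<in>B. box k a b)"
    and B': "finite B'" "K = (\<Union>(k,a,b)\<in>B'. box k a b)"
    using assms unfolding box_union_def by blast
  have eq: "J \<inter> K = (\<Union>u\<in>B. \<Union>v\<in>B'. (case u of (k,a,b) \<Rightarrow> box k a b) \<inter> (case v of (k,a,b) \<Rightarrow> box k a b))"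
    unfolding B(2) B'(2) by blast
  have boxes: "box_union (box k a b \<inter> box k' a' b')" for k a b k' a' b'
    unfolding box_Int by (simp add: box_union_box box_union_empty)
  show ?thesis unfolding eq
    by (intro box_union_UN ballI) (simp_all add: B(1) B'(1) boxes split: prod.split)
qed

lemma subdomain_Int:
  "subdomain D J \<Longrightarrow> subdomain D K \<Longrightarrow> J \<inter> K \<noteq> {} \<Longrightarrow> subdomain D (J \<inter> K)"
  unfolding subdomain_iff_box_union using box_union_Int by blast

lemma subdomain_obtain_box:
  assumes "subdomain D J"
  obtains k a b where "a < b" "box k a b \<subseteq> J"
  using assms unfolding subdomain_def by fast

lemma subdomain_infinite:
  assumes "subdomain D J" shows "infinite J"
proof -
  obtain k a b where ab: "a < b" "box k a b \<subseteq> J" by (rule subdomain_obtain_box[OF assms])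
  have "box k a b = Pair k ` {a..<b}" by (auto simp: box_def)
  hence "infinite (box k a b)" using ab(1) by (simp add: finite_image_iff inj_on_def infinite_Ico)
  thus ?thesis using ab(2) finite_subset by blast
qed

lemma translation_image_box:
  assumes "\<forall>x\<in>{a..<b}. f (k, x) = (k', x + c)" "a \<le> a'" "b' \<le> b"
  shows "f ` box k a' b' = box k' (a' + c) (b' + c)"
proof
  show "f ` box k a' b' \<subseteq> box k' (a' + c) (b' + c)" using assms by (auto simp: box_def)
  show "box k' (a' + c) (b' + c) \<subseteq> f ` box k a' b'"
  proof
    fix q assume "q \<in> box k' (a' + c) (b' + c)"
    then obtain y where y: "q = (k', y)" "a' \<le> y - c" "y - c < b'" by (auto simp: box_def)
    hence "f (k, y - c) = q" using assms by auto
    moreover have "(k, y - c) \<in> box k a' b'" using y by (auto simp: box_def)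
    ultimately show "q \<in> f ` box k a' b'" by blast
  qed
qed

lemma translation_image_box_union:
  assumes "\<forall>x\<in>{a..<b}. f (k, x) = (k', x + c)" "box_union J" "J \<subseteq> box k a b"
  shows "box_union (f ` J)"
proof -
  obtain B where B: "finite B" "J = (\<Union>(k,a,b)\<in>B. box k a b)"
    using assms(2) unfolding box_union_def by blast
  have "J = (\<Union>u\<in>B. (case u of (k,a,b) \<Rightarrow> box k a b) \<inter> box k a b)"
    using B(2) assms(3) by blast
  hence "f ` J = (\<Union>u\<in>B. f ` ((case u of (k,a,b) \<Rightarrow> box k a b) \<inter> box k a b))" by blast
  moreover have "box_union (f ` (box k'' a'' b'' \<inter> box k a b))" for k'' a'' b''
    using translation_image_box[OF assms(1), of "max a'' a" "min b'' b"]
    by (simp add: box_Int box_union_box box_union_empty)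
  ultimately show ?thesis using B(1) by (auto intro!: box_union_UN)
qed

section \<open>Interval exchanges\<close>

definition piecewise_translation :: "(nat \<times> real) set \<Rightarrow> ((nat \<times> real) \<Rightarrow> (nat \<times> real)) \<Rightarrow> bool" where
  "piecewise_translation D f \<longleftrightarrow> (\<exists>P. finite P \<and> (\<forall>(k,a,b)\<in>P. a < b \<and> box k a b \<subseteq> D) \<and>
     D = (\<Union>(k,a,b)\<in>P. box k a b) \<and>
     (\<forall>(k,a,b)\<in>P. \<exists>k' c. \<forall>x\<in>{a..<b}. f (k, x) = (k', x + c)))"

lemma IET_iff: "f \<in> IET D \<longleftrightarrow> bij_betw f D D \<and> piecewise_translation D f"
  by (simp add: IET_def piecewise_translation_def)

lemma piecewise_translationE:
  assumes "piecewise_translation D f"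
  obtains P \<kappa> \<tau> where "finite P" "\<forall>(k,a,b)\<in>P. a < b \<and> box k a b \<subseteq> D"
    "D = (\<Union>(k,a,b)\<in>P. box k a b)"
    "\<forall>(k,a,b)\<in>P. \<forall>x\<in>{a..<b}. f (k, x) = (\<kappa> (k,a,b), x + \<tau> (k,a,b))"
proof -
  obtain P where P: "finite P" "\<forall>(k,a,b)\<in>P. a < b \<and> box k a b \<subseteq> D"
    "D = (\<Union>(k,a,b)\<in>P. box k a b)"
    "\<forall>(k,a,b)\<in>P. \<exists>k' c. \<forall>x\<in>{a..<b}. f (k, x) = (k', x + c)"
    using assms unfolding piecewise_translation_def by blast
  have "\<forall>\<pi>\<in>P. \<exists>kc. \<forall>x\<in>{fst (snd \<pi>)..<snd (snd \<pi>)}. f (fst \<pi>, x) = (fst kc, x + snd kc)"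
    using P(4) by fastforce
  then obtain F where F: "\<forall>\<pi>\<in>P. \<forall>x\<in>{fst (snd \<pi>)..<snd (snd \<pi>)}. f (fst \<pi>, x) = (fst (F \<pi>), x + snd (F \<pi>))"
    by metis
  have "\<forall>(k,a,b)\<in>P. \<forall>x\<in>{a..<b}. f (k, x) = ((fst \<circ> F) (k,a,b), x + (snd \<circ> F) (k,a,b))"
    using F by fastforce
  thus ?thesis using that P by blast
qed

lemma piecewise_translation_image_subdomain:
  assumes "bij_betw f D D" "piecewise_translation D f" "subdomain D J"
  shows "subdomain D (f ` J)"
proof -
  obtain P \<kappa> \<tau> where P: "finite P" "\<forall>(k,a,b)\<in>P. a < b \<and> box k a b \<subseteq> D"
    "D = (\<Union>(k,a,b)\<in>P. box k a b)"
    "\<forall>(k,a,b)\<in>P. \<forall>x\<in>{a..<b}. f (k, x) = (\<kappa> (k,a,b), x + \<tau> (k,a,b))"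
    by (rule piecewise_translationE[OF assms(2)])
  have J: "J \<subseteq> D" "J \<noteq> {}" "box_union J" using assms(3) unfolding subdomain_iff_box_union by auto
  have "J = (\<Union>(k,a,b)\<in>P. J \<inter> box k a b)" using J(1) P(3) by blast
  hence "f ` J = (\<Union>(k,a,b)\<in>P. f ` (J \<inter> box k a b))" by blast
  moreover have "box_union (f ` (J \<inter> box k a b))" if "(k,a,b) \<in> P" for k a b
    using translation_image_box_union[of a b f k] P(4) that box_union_Int[OF J(3) box_union_box]
    by blast
  ultimately have "box_union (f ` J)" using P(1) by (auto intro!: box_union_UN)
  moreover have "f ` J \<subseteq> D" using J(1) assms(1) bij_betw_imp_surj_on by blast
  ultimately show ?thesis using J(2) unfolding subdomain_iff_box_union by blast
qed

lemma piecewise_translation_image_closure: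
  assumes "piecewise_translation D f" "subdomain D J" "J \<subseteq> closure S"
  shows "f ` J \<subseteq> closure (f ` S)"
proof
  obtain P \<kappa> \<tau> where P: "finite P" "\<forall>(k,a,b)\<in>P. a < b \<and> box k a b \<subseteq> D"
    "D = (\<Union>(k,a,b)\<in>P. box k a b)"
    "\<forall>(k,a,b)\<in>P. \<forall>x\<in>{a..<b}. f (k, x) = (\<kappa> (k,a,b), x + \<tau> (k,a,b))"
    by (rule piecewise_translationE[OF assms(1)])
  obtain B where B: "J = (\<Union>(k,a,b)\<in>B. box k a b)" "J \<subseteq> D"
    using assms(2) unfolding subdomain_def by blast
  fix q assume "q \<in> f ` J"
  then obtain k t where kt: "(k, t) \<in> J" "q = f (k, t)" by auto
  then obtain c d where cd: "(k, c, d) \<in> B" "c \<le> t" "t < d" using B(1) by (auto simp: box_def)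
  obtain a b where ab: "(k, a, b) \<in> P" "a \<le> t" "t < b" using P(3) kt(1) B(2) by (auto simp: box_def)
  have q: "q = (\<kappa> (k,a,b), t + \<tau> (k,a,b))" using P(4) ab kt(2) by auto
  show "q \<in> closure (f ` S)"
    unfolding q mem_closure_iff_nearby
  proof (intro allI impI)
    fix \<epsilon> :: real assume "\<epsilon> > 0"
    \<comment> \<open>approximate from the right: points left of t may lie in other pieces of P or B\<close>
    define \<delta> where "\<delta> = min (min b d - t) \<epsilon> / 2"
    have \<delta>: "\<delta> > 0" "t + 2 * \<delta> \<le> min b d" "2 * \<delta> \<le> \<epsilon>" using \<open>\<epsilon> > 0\<close> cd ab unfolding \<delta>_def by auto
    have "(k, t + \<delta>) \<in> box k c d" using cd \<delta> by (auto simp: box_def)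
    hence "(k, t + \<delta>) \<in> closure S" using B(1) cd(1) assms(3) by blast
    then obtain s where s: "(k, s) \<in> S" "\<bar>s - (t + \<delta>)\<bar> < \<delta>"
      using \<delta>(1) unfolding mem_closure_iff_nearby by blast
    have sr: "a \<le> s" "s < b" "\<bar>s - t\<bar> < \<epsilon>" using s \<delta> ab by auto
    have "(\<kappa> (k,a,b), s + \<tau> (k,a,b)) \<in> f ` S" using P(4) ab(1) sr s(1) by (auto intro!: image_eqI)
    thus "\<exists>y. (\<kappa> (k,a,b), y) \<in> f ` S \<and> \<bar>y - (t + \<tau> (k,a,b))\<bar> < \<epsilon>"
      using sr(3) by (intro exI[of _ "s + \<tau> (k,a,b)"]) auto
  qed
qed

lemma piecewise_translation_inv_into:
  assumes "bij_betw f D D" "piecewise_translation D f"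
  shows "piecewise_translation D (inv_into D f)"
proof -
  obtain P \<kappa> \<tau> where P: "finite P" "\<forall>(k,a,b)\<in>P. a < b \<and> box k a b \<subseteq> D"
    "D = (\<Union>(k,a,b)\<in>P. box k a b)"
    "\<forall>(k,a,b)\<in>P. \<forall>x\<in>{a..<b}. f (k, x) = (\<kappa> (k,a,b), x + \<tau> (k,a,b))"
    by (rule piecewise_translationE[OF assms(2)])
  let ?shift = "\<lambda>(k,a,b). (\<kappa> (k,a,b), a + \<tau> (k,a,b), b + \<tau> (k,a,b))"
  have img: "f ` box k a b = box (\<kappa> (k,a,b)) (a + \<tau> (k,a,b)) (b + \<tau> (k,a,b))" if "(k,a,b) \<in> P" for k a b
    using P(4) that by (intro translation_image_box[of a b f k "\<kappa> (k,a,b)" "\<tau> (k,a,b)"]) auto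
  have fD: "f ` D = D" using assms(1) by (simp add: bij_betw_def)
  have "D = (\<Union>(k,a,b)\<in>P. f ` box k a b)" using fD P(3) by (simp add: image_UN split_def)
  also have "\<dots> = (\<Union>(k,a,b)\<in>?shift ` P. box k a b)" using img by force
  finally have cover: "D = (\<Union>(k,a,b)\<in>?shift ` P. box k a b)" .
  have pieces: "\<forall>(k,a,b)\<in>?shift ` P. a < b \<and> box k a b \<subseteq> D"
    using P(2) img fD by (fastforce simp: image_mono)
  have "inv_into D f (\<kappa> (k,a,b), y) = (k, y + - \<tau> (k,a,b))"
    if "(k,a,b) \<in> P" "y \<in> {a + \<tau> (k,a,b)..<b + \<tau> (k,a,b)}" for k a b y
  proof (rule inv_into_f_eq[OF bij_betw_imp_inj_on[OF assms(1)]])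
    have "(k, y + - \<tau> (k,a,b)) \<in> box k a b" using that(2) by (auto simp: box_def)
    thus "(k, y + - \<tau> (k,a,b)) \<in> D" using P(2) that(1) by blast
    show "f (k, y + - \<tau> (k,a,b)) = (\<kappa> (k,a,b), y)" using P(4) that by auto
  qed
  hence "\<forall>(k,a,b)\<in>?shift ` P. \<exists>k' c. \<forall>x\<in>{a..<b}. inv_into D f (k, x) = (k', x + c)" by fastforce
  thus ?thesis unfolding piecewise_translation_def using P(1) cover pieces by blast
qed

text \<open>The only properties of interval exchanges used below; unlike membership in IET D, they are
  evidently preserved by composition.\<close>
definition tame :: "(nat \<times> real) set \<Rightarrow> ((nat \<times> real) \<Rightarrow> (nat \<times> real)) \<Rightarrow> bool" where
  "tame D f \<longleftrightarrow> bij_betw f D D \<and> (\<forall>J. subdomain D J \<longrightarrow> subdomain D (f ` J)) \<and>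
     (\<forall>J S. subdomain D J \<longrightarrow> J \<subseteq> closure S \<longrightarrow> f ` J \<subseteq> closure (f ` S))"

lemma tame_bij: "tame D f \<Longrightarrow> bij_betw f D D"
  by (simp add: tame_def)

lemma tame_image_subdomain: "tame D f \<Longrightarrow> subdomain D J \<Longrightarrow> subdomain D (f ` J)"
  by (simp add: tame_def)

lemma tame_image_closure: "tame D f \<Longrightarrow> subdomain D J \<Longrightarrow> J \<subseteq> closure S \<Longrightarrow> f ` J \<subseteq> closure (f ` S)"
  by (simp add: tame_def)

lemma tame_if_piecewise_translation:
  "bij_betw f D D \<Longrightarrow> piecewise_translation D f \<Longrightarrow> tame D f"
  unfolding tame_def
  using piecewise_translation_image_subdomain piecewise_translation_image_closure by blast

lemma tame_IET: "f \<in> IET D \<Longrightarrow> tame D f"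
  unfolding IET_iff by (blast intro: tame_if_piecewise_translation)

lemma tame_inv_into_IET: "f \<in> IET D \<Longrightarrow> tame D (inv_into D f)"
  unfolding IET_iff
  by (blast intro: tame_if_piecewise_translation bij_betw_inv_into piecewise_translation_inv_into)

lemma tame_comp: assumes "tame D f" "tame D h" shows "tame D (f \<circ> h)"
  unfolding tame_def image_comp[symmetric]
  using assms bij_betw_trans[OF tame_bij[OF assms(2)] tame_bij[OF assms(1)]]
  by (meson tame_image_closure tame_image_subdomain)

section \<open>Orbits and semiconjugacies\<close>

lemma image_image_commute:
  assumes "\<forall>p\<in>K. h' (f p) = f (h p)"
  shows "h' ` f ` K = f ` h ` K"
proof -
  have "h' ` f ` K = (\<lambda>p. h' (f p)) ` K" by (rule image_image)
  also have "\<dots> = (\<lambda>p. f (h p)) ` K" using assms by (intro image_cong) auto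
  finally show ?thesis by (simp add: image_image)
qed

lemma funpow_semiconj:
  assumes "\<forall>q\<in>D. G q \<in> D" "\<forall>q\<in>D. F (\<phi> q) = \<phi> (G q)" "q \<in> D"
  shows "(F ^^ n) (\<phi> q) = \<phi> ((G ^^ n) q)"
proof -
  have "(F ^^ n) (\<phi> q) = \<phi> ((G ^^ n) q) \<and> (G ^^ n) q \<in> D"
    using assms by (induction n) auto
  thus ?thesis ..
qed

lemma inv_into_semiconj:
  assumes "bij_betw \<phi> D D" "bij_betw F D D" "bij_betw G D D" "\<forall>q\<in>D. F (\<phi> q) = \<phi> (G q)" "q \<in> D"
  shows "inv_into D F (\<phi> q) = \<phi> (inv_into D G q)"
proof -
  define r where "r = inv_into D G q"
  have r: "r \<in> D" "G r = q"
    unfolding r_def using assms(3,5) by (auto intro: inv_into_into f_inv_into_f simp: bij_betw_def)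
  have "F (\<phi> r) = \<phi> q" using assms(4) r by auto
  moreover have "\<phi> r \<in> D" using r(1) assms(1) bij_betwE by blast
  ultimately show ?thesis unfolding r_def[symmetric]
    using inv_into_f_eq[OF bij_betw_imp_inj_on[OF assms(2)]] by blast
qed

lemma cyc_orbit_semiconj:
  assumes "bij_betw \<phi> D D" "bij_betw F D D" "bij_betw G D D" "\<forall>q\<in>D. F (\<phi> q) = \<phi> (G q)" "q \<in> D"
  shows "cyc_orbit D F (\<phi> q) = \<phi> ` cyc_orbit D G q"
proof -
  have "ipow D F m (\<phi> q) = \<phi> (ipow D G m q)" for m
  proof (cases "0 \<le> m")
    case True
    have "\<forall>q\<in>D. G q \<in> D" using assms(3) bij_betwE by blast
    thus ?thesis using True funpow_semiconj[of D G F \<phi>] assms(4,5) unfolding ipow_def by simp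
  next
    case False
    have "\<forall>q\<in>D. inv_into D F (\<phi> q) = \<phi> (inv_into D G q)"
      using inv_into_semiconj[OF assms(1-4)] by blast
    moreover have "\<forall>q\<in>D. inv_into D G q \<in> D"
      using bij_betw_inv_into[OF assms(3)] bij_betwE by blast
    ultimately show ?thesis using False assms(5) funpow_semiconj[of D "inv_into D G"]
      unfolding ipow_def by simp
  qed
  thus ?thesis unfolding cyc_orbit_def by auto
qed

lemma cyc_orbit_subset_invariant:
  assumes "bij_betw h D D" "S \<subseteq> D" "h ` S = S" "p \<in> S"
  shows "cyc_orbit D h p \<subseteq> S"
proof -
  have "inv_into D h q \<in> S" if "q \<in> S" for q
  proof -
    have "q \<in> h ` S" using that assms(3) by simp
    then obtain s where s: "s \<in> S" "q = h s" by blast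
    hence "s \<in> D" using assms(2) by blast
    thus ?thesis using s inv_into_f_f[OF bij_betw_imp_inj_on[OF assms(1)]] by simp
  qed
  hence "(inv_into D h ^^ n) p \<in> S" for n using assms(4) by (induction n) auto
  moreover have "(h ^^ n) p \<in> S" for n using assms(3,4) by (induction n) auto
  ultimately show ?thesis unfolding cyc_orbit_def ipow_def by auto
qed

text \<open>An irreducible invariant set has no proper invariant subdomain: the subdomain contains a box,
  which the orbit of a point outside it would have to approach.\<close>
lemma irreducible_on_invariant_subdomain_eq:
  assumes "bij_betw h D D" "J \<subseteq> D" "h ` J = J" "irreducible_on D h J"
    "subdomain D K" "K \<subseteq> J" "h ` K = K"
  shows "K = J"
proof (rule ccontr)
  assume "K \<noteq> J"
  then obtain p where p: "p \<in> J - K" using assms(6) by blast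
  have "h ` (J - K) = J - K"
    using inj_on_image_set_diff[OF bij_betw_imp_inj_on[OF assms(1)], of J K] assms(2,3,6,7) by auto
  hence orb: "cyc_orbit D h p \<subseteq> J - K"
    using cyc_orbit_subset_invariant[OF assms(1)] assms(2) p by blast
  obtain k c d where cd: "c < d" "box k c d \<subseteq> K" by (rule subdomain_obtain_box[OF assms(5)])
  have "(k, (c + d) / 2) \<in> box k c d" using cd(1) by (simp add: box_def)
  hence "(k, (c + d) / 2) \<in> J" using cd(2) assms(6) by blast
  hence "(k, (c + d) / 2) \<in> closure (cyc_orbit D h p)"
    using assms(4) p unfolding irreducible_on_def by blast
  moreover have "(d - c) / 2 > 0" using cd(1) by simp
  ultimately obtain y where y: "(k, y) \<in> cyc_orbit D h p" "\<bar>y - (c + d) / 2\<bar> < (d - c) / 2"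
    unfolding mem_closure_iff_nearby by blast
  have "c \<le> y" "y < d" using y(2) unfolding abs_less_iff by (simp_all add: field_simps)
  hence "(k, y) \<in> box k c d" by (simp add: box_def)
  thus False using y(1) orb cd(2) by blast
qed

lemma inv_into_funpow_funpow:
  assumes "bij_betw h D D" "q \<in> D" "n \<le> k"
  shows "(inv_into D h ^^ n) ((h ^^ k) q) = (h ^^ (k - n)) q"
  using assms(3)
proof (induction n)
  case (Suc n)
  have inD: "(h ^^ (k - Suc n)) q \<in> D"
    using bij_betw_funpow[OF assms(1)] assms(2) bij_betwE by blast
  have "k - n = Suc (k - Suc n)" using Suc.prems by simp
  hence "(h ^^ (k - n)) q = h ((h ^^ (k - Suc n)) q)" by simp
  thus ?case
    using Suc inv_into_f_f[OF bij_betw_imp_inj_on[OF assms(1)] inD] by simp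
qed simp

lemma cyc_orbit_finite:
  assumes "bij_betw h D D" "M > 0" "p \<in> D" "(h ^^ M) p = p"
  shows "finite (cyc_orbit D h p)"
proof -
  have period: "(h ^^ (M * j)) p = p" for j
    using funpow_mod_eq[OF assms(4), of "M * j"] by simp
  have fw: "(h ^^ n) p \<in> (\<lambda>r. (h ^^ r) p) ` {..<M}" for n
    using funpow_mod_eq[OF assms(4), of n] assms(2) by (metis image_eqI lessThan_iff mod_less_divisor)
  have "(inv_into D h ^^ n) p = (h ^^ (M * n - n)) p" for n
    using inv_into_funpow_funpow[OF assms(1,3), of n "M * n"] period assms(2) by simp
  hence "cyc_orbit D h p \<subseteq> (\<lambda>r. (h ^^ r) p) ` {..<M}"
    unfolding cyc_orbit_def ipow_def using fw by auto
  thus ?thesis using finite_subset by blast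
qed

section \<open>Irreducible components\<close>

lemma irreducible_componentsD:
  assumes "irreducible_components D h C"
  shows "finite C" and "J \<in> C \<Longrightarrow> subdomain D J" and "J \<in> C \<Longrightarrow> h ` J = J"
    and "J \<in> C \<Longrightarrow> irreducible_on D h J"
    and "J \<in> C \<Longrightarrow> J' \<in> C \<Longrightarrow> J \<noteq> J' \<Longrightarrow> J \<inter> J' = {}"
    and "\<exists>M\<ge>1. \<forall>p\<in>D - \<Union>C. (h ^^ M) p = p"
  using assms unfolding irreducible_components_def cyc_invariant_def by auto

lemma semiconj_image_irreducible:
  assumes "tame D \<phi>" "bij_betw F D D" "bij_betw G D D" "\<forall>q\<in>D. F (\<phi> q) = \<phi> (G q)"
    and J: "subdomain D J" "G ` J = J" "irreducible_on D G J"
  shows "subdomain D (\<phi> ` J)" and "F ` \<phi> ` J = \<phi> ` J" and "irreducible_on D F (\<phi> ` J)"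
proof -
  have JD: "J \<subseteq> D" using J(1) by (rule subdomain_subset)
  show "subdomain D (\<phi> ` J)" using assms(1) J(1) by (rule tame_image_subdomain)
  have "F ` \<phi> ` J = \<phi> ` G ` J" using assms(4) JD by (intro image_image_commute) blast
  thus "F ` \<phi> ` J = \<phi> ` J" using J(2) by simp
  show "irreducible_on D F (\<phi> ` J)"
    unfolding irreducible_on_def
  proof
    fix p assume "p \<in> \<phi> ` J"
    then obtain q where q: "q \<in> J" "p = \<phi> q" by blast
    have "J \<subseteq> closure (cyc_orbit D G q)" using J(3) q(1) unfolding irreducible_on_def by blast
    hence "\<phi> ` J \<subseteq> closure (\<phi> ` cyc_orbit D G q)" by (rule tame_image_closure[OF assms(1) J(1)])
    moreover have "cyc_orbit D F p = \<phi> ` cyc_orbit D G q"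
      using cyc_orbit_semiconj[OF tame_bij[OF assms(1)] assms(2-4)] q JD by blast
    ultimately show "\<phi> ` J \<subseteq> closure (cyc_orbit D F p)" by simp
  qed
qed

lemma irreducible_components_semiconj:
  assumes "tame D \<phi>" "bij_betw F D D" "bij_betw G D D" "\<forall>q\<in>D. F (\<phi> q) = \<phi> (G q)"
    and "irreducible_components D G C"
  shows "irreducible_components D F ((`) \<phi> ` C)"
proof -
  note C = irreducible_componentsD[OF assms(5)]
  obtain M where M: "M \<ge> 1" "\<forall>p\<in>D - \<Union>C. (G ^^ M) p = p" using C(6) by blast
  have bij\<phi>: "bij_betw \<phi> D D" using assms(1) by (rule tame_bij)
  have subD: "J \<subseteq> D" if "J \<in> C" for J using C(2) that subdomain_subset by blast
  have "(F ^^ M) p = p" if p: "p \<in> D - \<Union>((`) \<phi> ` C)" for p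
  proof -
    have "p \<in> \<phi> ` D" using p bij\<phi> by (simp add: bij_betw_def)
    then obtain q where q: "q \<in> D" "p = \<phi> q" by blast
    hence "q \<in> D - \<Union>C" using p by auto
    hence "(G ^^ M) q = q" using M(2) by blast
    moreover have "\<forall>q\<in>D. G q \<in> D" using assms(3) bij_betwE by blast
    ultimately show ?thesis using funpow_semiconj[of D G F \<phi> q M] assms(4) q by simp
  qed
  moreover have "\<phi> ` J \<inter> \<phi> ` J' = {}" if "J \<in> C" "J' \<in> C" "\<phi> ` J \<noteq> \<phi> ` J'" for J J'
  proof -
    have "J \<inter> J' = {}" using C(5) that by blast
    thus ?thesis using inj_on_image_Int[OF bij_betw_imp_inj_on[OF bij\<phi>] subD[OF that(1)] subD[OF that(2)]]
      by simp
  qed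
  ultimately show ?thesis
    unfolding irreducible_components_def cyc_invariant_def
    using C(1-4) M(1) semiconj_image_irreducible[OF assms(1-4)] by auto
qed

text \<open>A finite orbit is closed, so it cannot be dense in an (infinite) subdomain.\<close>
lemma irreducible_subdomain_meets_components:
  assumes "bij_betw h D D" "irreducible_components D h C"
    and K: "subdomain D K" "h ` K = K" "irreducible_on D h K"
  shows "K \<inter> \<Union>C \<noteq> {}"
proof
  assume disj: "K \<inter> \<Union>C = {}"
  obtain M where M: "M \<ge> 1" "\<forall>p\<in>D - \<Union>C. (h ^^ M) p = p"
    using irreducible_componentsD(6)[OF assms(2)] by blast
  obtain p where p: "p \<in> K" using K(1) unfolding subdomain_def by blast
  have "p \<in> D" using p subdomain_subset[OF K(1)] by blast
  moreover have "(h ^^ M) p = p" using M(2) \<open>p \<in> D\<close> p disj by blast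
  ultimately have fin: "finite (cyc_orbit D h p)" using cyc_orbit_finite[OF assms(1), of M p] M(1) by simp
  have "K \<subseteq> closure (cyc_orbit D h p)" using K(3) p unfolding irreducible_on_def by blast
  hence "K \<subseteq> cyc_orbit D h p" using fin by (simp add: finite_imp_closed closure_closed)
  thus False using fin subdomain_infinite[OF K(1)] finite_subset by blast
qed

lemma tame_commuting_image_component:
  assumes "tame D f" "bij_betw h D D" "\<forall>p\<in>D. h (f p) = f (h p)"
    and C: "irreducible_components D h C" "K \<in> C"
  shows "f ` K \<in> C"
proof -
  note comps = irreducible_componentsD[OF C(1)]
  have fK: "subdomain D (f ` K)" "h ` f ` K = f ` K" "irreducible_on D h (f ` K)"
    using semiconj_image_irreducible[OF assms(1,2,2,3) comps(2-4)[OF C(2)]] by blast+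
  obtain K' where K': "K' \<in> C" "f ` K \<inter> K' \<noteq> {}"
    using irreducible_subdomain_meets_components[OF assms(2) C(1) fK] by blast
  have KD: "f ` K \<subseteq> D" and K'D: "K' \<subseteq> D"
    using fK(1) comps(2)[OF K'(1)] subdomain_subset by blast+
  have sI: "subdomain D (f ` K \<inter> K')" using subdomain_Int[OF fK(1) comps(2)[OF K'(1)] K'(2)] .
  have hI: "h ` (f ` K \<inter> K') = f ` K \<inter> K'"
    using inj_on_image_Int[OF bij_betw_imp_inj_on[OF assms(2)] KD K'D] fK(2) comps(3)[OF K'(1)] by simp
  have "f ` K \<inter> K' = K'"
    using irreducible_on_invariant_subdomain_eq[OF assms(2) K'D comps(3,4)[OF K'(1)] sI _ hI] by blast
  moreover have "f ` K \<inter> K' = f ` K"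
    using irreducible_on_invariant_subdomain_eq[OF assms(2) KD fK(2,3) sI _ hI] by blast
  ultimately show ?thesis using K'(1) by simp
qed

lemma finite_inj_on_funpow_returns:
  assumes "finite S" "F ` S \<subseteq> S" "inj_on F S" "x \<in> S"
  obtains n where "n > 0" "(F ^^ n) x = x"
proof -
  define p where "p y = (if y \<in> S then F y else y)" for y
  have "inj p" unfolding inj_def p_def using assms(2,3) by (auto simp: inj_on_def)
  have orbit: "(p ^^ n) x = (F ^^ n) x \<and> (F ^^ n) x \<in> S" for n
    using assms(2,4) by (induction n) (auto simp: p_def)
  hence "finite {y. \<exists>n. y = (p ^^ n) x}" using assms(1) by (auto intro: finite_subset)
  then obtain n where "n > 0" "(p ^^ n) x = x" by (rule funpow_inj_finite[OF \<open>inj p\<close>])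
  thus ?thesis using that orbit by metis
qed

lemma image_funpow:
  fixes f :: "'a \<Rightarrow> 'a"
  shows "((`) f ^^ n) K = (f ^^ n) ` K"
  by (induction n) (simp_all add: image_comp)

lemma tame_commuting_power_fixes_component:
  assumes "tame D f" "bij_betw h D D" "\<forall>p\<in>D. h (f p) = f (h p)"
    and C: "irreducible_components D h C" "J \<in> C"
  obtains n where "n > 0" "(f ^^ n) ` J = J"
proof -
  have subD: "K \<subseteq> D" if "K \<in> C" for K
    using irreducible_componentsD(2)[OF C(1) that] by (rule subdomain_subset)
  have "(`) f ` C \<subseteq> C" using tame_commuting_image_component[OF assms(1-3) C(1)] by blast
  moreover have "inj_on ((`) f) C"
    using inj_on_image_eq_iff[OF bij_betw_imp_inj_on[OF tame_bij[OF assms(1)]]] subD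
    unfolding inj_on_def by blast
  moreover have "finite C" using C(1) by (rule irreducible_componentsD)
  ultimately obtain n where "n > 0" "((`) f ^^ n) J = J"
    using finite_inj_on_funpow_returns C(2) by metis
  thus ?thesis using that image_funpow by metis
qed

lemma tame_semiconj_stable:
  assumes "tame D \<phi>" "bij_betw F D D" "bij_betw G D D" "\<forall>q\<in>D. F (\<phi> q) = \<phi> (G q)"
    and "stable_elem D F"
  shows "stable_elem D G"
  unfolding stable_elem_def cyc_invariant_def
proof (intro allI impI)
  fix m :: nat and J assume m: "m \<ge> 1" and J: "subdomain D J" "(G ^^ m) ` J = J"
  have JD: "J \<subseteq> D" using J(1) by (rule subdomain_subset)
  have GD: "\<forall>q\<in>D. G q \<in> D" using assms(3) bij_betwE by blast
  have "(F ^^ m) ` \<phi> ` J = \<phi> ` (G ^^ m) ` J"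
    using funpow_semiconj[OF GD assms(4)] JD by (intro image_image_commute) blast
  hence "(F ^^ m) ` \<phi> ` J = \<phi> ` J" using J(2) by simp
  hence "F ` \<phi> ` J = \<phi> ` J"
    using assms(5) m tame_image_subdomain[OF assms(1) J(1)]
    unfolding stable_elem_def cyc_invariant_def by blast
  moreover have "F ` \<phi> ` J = \<phi> ` G ` J" using assms(4) JD by (intro image_image_commute) blast
  moreover have "G ` J \<subseteq> D" using GD JD by blast
  ultimately show "G ` J = J"
    using inj_on_image_eq_iff[OF bij_betw_imp_inj_on[OF tame_bij[OF assms(1)]]] JD by metis
qed

lemma stable_component_subset_commuting_component:
  assumes "tame D h" "bij_betw f D D" "\<forall>p\<in>D. f (h p) = h (f p)" "stable_elem D h"
    and CH: "irreducible_components D h CH" "J \<in> CH"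
    and CF: "irreducible_components D f CF" "K \<in> CF"
    and "J \<inter> K \<noteq> {}"
  shows "J \<subseteq> K"
proof -
  obtain n where n: "n > 0" "(h ^^ n) ` K = K"
    by (rule tame_commuting_power_fixes_component[OF assms(1-3) CF])
  have J: "subdomain D J" "h ` J = J" "irreducible_on D h J"
    using irreducible_componentsD(2-4)[OF CH(1)] CH(2) by blast+
  have K: "subdomain D K" using irreducible_componentsD(2)[OF CF] .
  have JD: "J \<subseteq> D" and KD: "K \<subseteq> D" using J(1) K subdomain_subset by blast+
  have bij_h: "bij_betw h D D" using assms(1) by (rule tame_bij)
  have "((`) h ^^ n) J = J" using J(2) by (induction n) simp_all
  hence "(h ^^ n) ` J = J" by (simp add: image_funpow)
  hence "(h ^^ n) ` (J \<inter> K) = J \<inter> K"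
    using inj_on_image_Int[OF bij_betw_imp_inj_on[OF bij_betw_funpow[OF bij_h]] JD KD] n(2) by simp
  moreover have sI: "subdomain D (J \<inter> K)" using subdomain_Int[OF J(1) K assms(9)] .
  moreover have "n \<ge> 1" using n(1) by simp
  ultimately have "h ` (J \<inter> K) = J \<inter> K"
    using assms(4) unfolding stable_elem_def cyc_invariant_def by blast
  hence "J \<inter> K = J" using irreducible_on_invariant_subdomain_eq[OF bij_h JD J(2,3) sI] by blast
  thus ?thesis by blast
qed

theorem mainTheorem11:
  fixes D :: "(nat \<times> real) set"
    and a g :: "(nat \<times> real) \<Rightarrow> (nat \<times> real)"
    and C :: "(nat \<times> real) set set"
  assumes "is_domain D"
    and "a \<in> IET D" and "g \<in> IET D"
    and "stable_elem D a"
    and "irreducible_components D a C"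
    and "\<forall>p\<in>D. (g \<circ> a \<circ> inv_into D g) (a p) = a ((g \<circ> a \<circ> inv_into D g) p)"
  shows "\<forall>I\<in>C. g ` I \<inter> \<Union>C = {} \<or> (\<exists>J\<in>C. g ` I = J)"
proof
  fix I assume I: "I \<in> C"
  define b where "b = g \<circ> a \<circ> inv_into D g"
  have tame: "tame D a" "tame D g" "tame D (inv_into D g)"
    using assms(2,3) tame_IET tame_inv_into_IET by blast+
  hence tame_b: "tame D b" unfolding b_def by (intro tame_comp)
  have bij: "bij_betw a D D" "bij_betw g D D" "bij_betw b D D"
    using tame tame_b tame_bij by blast+
  have g_inv: "inv_into D g (g q) = q" if "q \<in> D" for q
    using that bij(2) by (simp add: bij_betw_def)
  have inv_D: "inv_into D g p \<in> D" if "p \<in> D" for p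
    using that bij(2) by (auto simp: bij_betw_def intro: inv_into_into)
  have a_D: "a q \<in> D" if "q \<in> D" for q using that bij(1) bij_betwE by blast
  have "\<forall>q\<in>D. b (g q) = g (a q)" unfolding b_def using g_inv by simp
  moreover have "\<forall>p\<in>D. a (inv_into D g p) = inv_into D g (b p)"
    unfolding b_def using g_inv inv_D a_D by simp
  ultimately have components_b: "irreducible_components D b ((`) g ` C)" and stable_b: "stable_elem D b"
    using irreducible_components_semiconj[OF tame(2) bij(3,1) _ assms(5)]
      tame_semiconj_stable[OF tame(3) bij(1,3) _ assms(4)] by blast+
  have comm: "\<forall>p\<in>D. b (a p) = a (b p)" using assms(6) unfolding b_def .
  show "g ` I \<inter> \<Union>C = {} \<or> (\<exists>J\<in>C. g ` I = J)"
  proof (cases "g ` I \<inter> \<Union>C = {}")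
    case False
    then obtain J where J: "J \<in> C" "J \<inter> g ` I \<noteq> {}" by blast
    have "J \<subseteq> g ` I"
      using stable_component_subset_commuting_component[OF tame(1) bij(3) comm assms(4,5) J(1)
          components_b imageI[OF I] J(2)] .
    moreover have "g ` I \<subseteq> J"
      using stable_component_subset_commuting_component[OF tame_b bij(1) _ stable_b components_b
          imageI[OF I] assms(5) J(1)] comm J(2) by (metis inf_commute)
    ultimately show ?thesis using J(1) by blast
  qed simp
qed

end
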